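(* With the notation of the context, suppose there are two sample points $\bm x_\alpha,\bm x_\beta$ such that $$\min_{j\in J_{\geq,\alpha}}u_j(\bm x_\beta)>u^*(\bm x_\beta)=u_\beta(\bm x_\beta).$$ Then there exists a point $\bm x_\gamma\in\mathcal{L}(\bm x_\alpha,\bm x_\beta)=\{\lambda\bm x_\alpha+(1-\lambda)\bm x_\beta:\lambda\in(0,1)\}$ and an affine local piece $u_\gamma$ of $u^*$ with $u^*(\bm x_\gamma)=u_\gamma(\bm x_\gamma)$ such that $$u_\gamma(\bm x_\alpha)\ge u_\alpha(\bm x_\alpha),\qquad u_\gamma(\bm x_\beta)\le u_\beta(\bm x_\beta).$$ Moreover, after adding $(\bm x_\gamma,u_\gamma)$ to the sample set (and recomputing $J_{\geq,\alpha}$ accordingly), $\min_{j\in J_{\geq,\alpha}}u_j(\bm x_\beta)\le u_\beta(\bm x_\beta)$.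
   Context: Let $\Omega\subseteq\mathbb{R}^{n_x}$ be a convex polyhedron and $u^*:\Omega\to\mathbb{R}$ a continuous piecewise affine (PWA) function: $\Omega$ is the union of finitely many closed convex polyhedra (local regions) with pairwise disjoint interiors, and on each local region $u^*$ coincides with an affine function (its local piece). Sample points $\bm x_1,\dots,\bm x_{N_s}\in\Omega$ are given, each lying in the interior of a unique order (UO) region $\Gamma(\bm x_i)$ (a closed polyhedron inside a local region on whose interior the order of all distinct local pieces of $u^*$ is constant), and $u_i$ denotes the local piece of $u^*$ on $\Gamma(\bm x_i)$, so $u_i(\bm x_i)=u^*(\bm x_i)$. Define $J_{\geq,i}=\{j: u_j(\bm x_i)\ge u_i(\bm x_i)\}$, where $j$ ranges over the indices of all current sample points. *)

theory Defs
  imports "HOL-Analysis.Analysis"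
begin

definition affine_fun :: "(real ^ 'n \<Rightarrow> real) \<Rightarrow> bool" where
  "affine_fun f \<longleftrightarrow> (\<exists>a b. \<forall>x. f x = a \<bullet> x + b)"

definition is_cont_pwa ::
  "(real ^ 'n) set \<Rightarrow> (real ^ 'n \<Rightarrow> real) \<Rightarrow> nat set \<Rightarrow> (nat \<Rightarrow> (real ^ 'n) set)
     \<Rightarrow> (nat \<Rightarrow> real ^ 'n \<Rightarrow> real) \<Rightarrow> bool" where
  "is_cont_pwa Omega ustar K R P \<longleftrightarrow>
     finite K \<and> continuous_on Omega ustar \<and> Omega = (\<Union>k\<in>K. R k) \<and>
     (\<forall>k\<in>K. polyhedron (R k) \<and> closed (R k) \<and> convex (R k)) \<and>
     (\<forall>k\<in>K. \<forall>l\<in>K. k \<noteq> l \<longrightarrow> interior (R k) \<inter> interior (R l) = {}) \<and>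
     (\<forall>k\<in>K. affine_fun (P k) \<and> (\<forall>x\<in>R k. ustar x = P k x))"

definition uo_region ::
  "nat set \<Rightarrow> (nat \<Rightarrow> (real ^ 'n) set) \<Rightarrow> (nat \<Rightarrow> real ^ 'n \<Rightarrow> real) \<Rightarrow> nat
     \<Rightarrow> (real ^ 'n) set \<Rightarrow> bool" where
  "uo_region K R P k G \<longleftrightarrow>
     k \<in> K \<and> polyhedron G \<and> closed G \<and> G \<subseteq> R k \<and>
     (\<forall>x\<in>interior G. \<forall>y\<in>interior G. \<forall>i\<in>K. \<forall>j\<in>K.
        sgn (P i x - P j x) = sgn (P i y - P j y))"

definition J_ge ::
  "nat set \<Rightarrow> (nat \<Rightarrow> real ^ 'n) \<Rightarrow> (nat \<Rightarrow> real ^ 'n \<Rightarrow> real) \<Rightarrow> nat \<Rightarrow> nat set" where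
  "J_ge I xs us i = {j\<in>I. us j (xs i) \<ge> us i (xs i)}"

end

theory Submission
  imports Defs
begin

text \<open>Walk along the segment from \<open>x\<^sub>\<beta>\<close> (parameter 0) to \<open>x\<^sub>\<alpha>\<close> (parameter 1) and
  compare \<open>u\<^sup>*\<close> with its chord \<open>d(t) = u\<^sup>*(x(t)) - (t u\<^sup>*(x\<^sub>\<alpha>) + (1-t) u\<^sup>*(x\<^sub>\<beta>))\<close>.
  Near \<open>t = 1\<close> the function \<open>u\<^sup>*\<close> is the affine piece \<open>u\<^sub>\<alpha>\<close>, and
  \<open>u\<^sub>\<alpha>(x\<^sub>\<beta>) > u\<^sup>*(x\<^sub>\<beta>)\<close> makes \<open>d\<close> positive there, while \<open>d(0) = 0\<close>.
  At the last point \<open>t\<^sub>0 < 1\<close> with \<open>d(t\<^sub>0) \<le> 0\<close> some local piece is active both at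
  \<open>t\<^sub>0\<close> and at a nearby point \<open>s > t\<^sub>0\<close>; restricted to it, \<open>d\<close> is affine in \<open>t\<close>,
  non-positive at \<open>t\<^sub>0\<close> and positive at \<open>s\<close>, hence increasing, which yields both endpoint
  inequalities. The new sample \<open>x(s)\<close> with that piece then belongs to \<open>J\<^sub>\<ge>\<^sub>,\<^sub>\<alpha>\<close> and
  witnesses the bound.\<close>

lemma affine_fun_segment:
  assumes "affine_fun f"
  shows "f (t *\<^sub>R x + (1 - t) *\<^sub>R y) = t * f x + (1 - t) * f y"
proof -
  obtain a b where "\<And>z. f z = a \<bullet> z + b" using assms unfolding affine_fun_def by blast
  then show ?thesis by (simp add: inner_add_right algebra_simps)
qed

lemma last_nonpos_before_pos_tail:
  fixes d :: "real \<Rightarrow> real"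
  assumes cont: "continuous_on {a..c} d" and "a \<le> c" "d a \<le> 0"
    and tail: "\<And>t. c < t \<Longrightarrow> t < b \<Longrightarrow> 0 < d t"
  shows "\<exists>t0\<in>{a..c}. d t0 \<le> 0 \<and> (\<forall>t. t0 < t \<longrightarrow> t < b \<longrightarrow> 0 < d t)"
proof -
  define T where "T = {a..c} \<inter> d -` {..0}"
  have "closed T"
    unfolding T_def by (rule continuous_closed_preimage[OF cont]) auto
  moreover have "bounded T" unfolding T_def by (rule bounded_subset[of "{a..c}"]) auto
  moreover have "a \<in> T" unfolding T_def using assms by simp
  ultimately obtain t0 where t0: "t0 \<in> T" "\<And>t. t \<in> T \<Longrightarrow> t \<le> t0"
    using compact_attains_sup[of T] compact_eq_bounded_closed by blast
  have "0 < d t" if "t0 < t" "t < b" for t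
  proof (cases "t \<le> c")
    case True
    have "t \<notin> T" using t0(2) that by force
    with True t0(1) that show ?thesis unfolding T_def by auto
  qed (use tail that in auto)
  with t0(1) show ?thesis unfolding T_def by auto
qed

lemma closed_cover_meets_right_of:
  fixes g :: "real \<Rightarrow> 'a::topological_space"
  assumes "finite K" "\<And>k. k \<in> K \<Longrightarrow> closed (R k)" "isCont g t0" "t0 < t1"
    and cover: "\<And>s. t0 < s \<Longrightarrow> s < t1 \<Longrightarrow> g s \<in> (\<Union>k\<in>K. R k)"
  shows "\<exists>k\<in>K. g t0 \<in> R k \<and> (\<exists>s. t0 < s \<and> s < t1 \<and> g s \<in> R k)"
proof -
  define K0 where "K0 = {k\<in>K. g t0 \<notin> R k}"
  have "\<forall>k\<in>K0. \<forall>\<^sub>F s in at_right t0. g s \<in> - R k"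
  proof
    fix k assume "k \<in> K0"
    then have "open (- R k)" "g t0 \<in> - R k" using assms(2) unfolding K0_def by auto
    then show "\<forall>\<^sub>F s in at_right t0. g s \<in> - R k"
      using topological_tendstoD[OF tendsto_within_subset[OF assms(3)[unfolded continuous_at]]]
      by blast
  qed
  then have "\<forall>\<^sub>F s in at_right t0. \<forall>k\<in>K0. g s \<in> - R k"
    using \<open>finite K\<close> unfolding K0_def by (intro eventually_ball_finite) auto
  moreover have "\<forall>\<^sub>F s in at_right t0. t0 < s \<and> s < t1"
    using eventually_at_right_real[OF assms(4)] by simp
  ultimately obtain s where s: "\<forall>k\<in>K0. g s \<notin> R k" "t0 < s" "s < t1"
    using eventually_happens[OF eventually_conj] trivial_limit_at_right_real by fastforce
  then obtain k where "k \<in> K" "g s \<in> R k" using cover by blast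
  with s show ?thesis unfolding K0_def by blast
qed

lemma interpolation_sign_change:
  fixes A B t0 s :: real
  assumes "0 \<le> t0" "t0 < s" "s \<le> 1"
    and "t0 * A + (1 - t0) * B \<le> 0" "0 < s * A + (1 - s) * B"
  shows "B \<le> 0" "0 \<le> A"
proof -
  have "B < A"
  proof (rule ccontr)
    assume "\<not> B < A"
    then have "(s - t0) * (A - B) \<le> 0" using assms by (intro mult_nonneg_nonpos) auto
    then show False using assms by (simp add: algebra_simps)
  qed
  then have "0 \<le> t0 * (A - B)" "0 \<le> (1 - s) * (A - B)" using assms by simp_all
  then show "B \<le> 0" "0 \<le> A" using assms by (simp_all add: algebra_simps)
qed

lemma Min_J_ge_insert_le:
  assumes "finite I" "g \<notin> I" "\<alpha> \<in> I" "us \<alpha> (xs \<alpha>) \<le> u (xs \<alpha>)"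
  shows "Min ((\<lambda>j. (us(g := u)) j y) ` J_ge (insert g I) (xs(g := x)) (us(g := u)) \<alpha>) \<le> u y"
proof -
  have "g \<in> J_ge (insert g I) (xs(g := x)) (us(g := u)) \<alpha>"
    using assms unfolding J_ge_def by (auto split: if_splits)
  moreover have "finite (J_ge (insert g I) (xs(g := x)) (us(g := u)) \<alpha>)"
    using assms(1) unfolding J_ge_def by auto
  ultimately show ?thesis by (metis (no_types, lifting) Min_le finite_imageI fun_upd_same image_eqI)
qed

lemma piece_dominating_on_segment:
  fixes ustar :: "real ^ 'n \<Rightarrow> real" and P :: "nat \<Rightarrow> real ^ 'n \<Rightarrow> real"
  assumes "convex Omega" "continuous_on Omega ustar" "finite K" "Omega = (\<Union>k\<in>K. R k)"
    and R_closed: "\<And>k. k \<in> K \<Longrightarrow> closed (R k)"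
    and pieces: "\<And>k. k \<in> K \<Longrightarrow> affine_fun (P k) \<and> (\<forall>x\<in>R k. ustar x = P k x)"
    and "ka \<in> K" "xa \<in> interior (R ka)" "xb \<in> Omega" "ustar xb < P ka xb"
  shows "\<exists>t k. 0 < t \<and> t < 1 \<and> k \<in> K \<and> t *\<^sub>R xa + (1 - t) *\<^sub>R xb \<in> R k \<and>
               ustar xa \<le> P k xa \<and> P k xb \<le> ustar xb"
proof -
  define g where "g t = t *\<^sub>R xa + (1 - t) *\<^sub>R xb" for t :: real
  define d where "d t = ustar (g t) - (t * ustar xa + (1 - t) * ustar xb)" for t
  have g_cont: "isCont g t" for t unfolding g_def by (intro continuous_intros)
  have g_cont_on: "continuous_on S g" for S unfolding g_def by (intro continuous_intros)
  have "xa \<in> Omega" using assms(4,7,8) interior_subset by blast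
  then have g_Omega: "g t \<in> Omega" if "t \<in> {0..1}" for t
    using convexD[OF assms(1) _ \<open>xb \<in> Omega\<close>, of xa t "1 - t"] that unfolding g_def by auto
  have d_piece: "d t = t * (P k xa - ustar xa) + (1 - t) * (P k xb - ustar xb)"
    if "k \<in> K" "g t \<in> R k" for k t
    using pieces[OF that(1)] that affine_fun_segment[of "P k" t xa xb]
    unfolding d_def g_def by (auto simp: algebra_simps)
  have "\<forall>\<^sub>F t in at_left 1. g t \<in> interior (R ka)"
    using topological_tendstoD[OF tendsto_within_subset[OF g_cont[of 1, unfolded continuous_at]]]
      assms(8) unfolding g_def by auto
  then obtain b where b: "b < 1" "\<And>t. b < t \<Longrightarrow> t < 1 \<Longrightarrow> g t \<in> interior (R ka)"
    unfolding eventually_at_left[of 0 "1::real", simplified] by blast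
  define c where "c = (max b 0 + 1) / 2"
  have c: "0 \<le> c" "c < 1" "b < c" using b(1) unfolding c_def by auto
  have tail: "0 < d t" if "c < t" "t < 1" for t
  proof -
    have "g t \<in> R ka" using b(2)[of t] c that interior_subset by auto
    moreover have "P ka xa = ustar xa"
      using pieces[OF assms(7)] assms(8) interior_subset by (metis subsetD)
    ultimately show ?thesis using d_piece[OF assms(7)] assms(10) that c by simp
  qed
  have "g ` {0..c} \<subseteq> Omega" using g_Omega c by auto
  then have "continuous_on {0..c} (\<lambda>t. ustar (g t))"
    by (rule continuous_on_compose2[OF assms(2) g_cont_on])
  then have "continuous_on {0..c} d" unfolding d_def by (intro continuous_intros)
  moreover have "d 0 \<le> 0" unfolding d_def g_def by simp
  ultimately obtain t0 where t0: "0 \<le> t0" "t0 \<le> c" "d t0 \<le> 0" "\<And>t. t0 < t \<Longrightarrow> t < 1 \<Longrightarrow> 0 < d t"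
    using last_nonpos_before_pos_tail[of 0 c d 1] c tail by auto
  have "t0 < 1" using t0(2) c(2) by linarith
  moreover have "g s \<in> (\<Union>k\<in>K. R k)" if "t0 < s" "s < 1" for s
    using g_Omega[of s] assms(4) that t0(1) by auto
  ultimately obtain k s where k: "k \<in> K" "g t0 \<in> R k" "t0 < s" "s < 1" "g s \<in> R k"
    using closed_cover_meets_right_of[where R = R, OF assms(3) R_closed g_cont] by blast
  have "t0 * (P k xa - ustar xa) + (1 - t0) * (P k xb - ustar xb) \<le> 0"
    using d_piece[OF k(1,2)] t0(3) by simp
  moreover have "0 < s * (P k xa - ustar xa) + (1 - s) * (P k xb - ustar xb)"
    using d_piece[OF k(1,5)] t0(4)[OF k(3,4)] by simp
  ultimately have "P k xb - ustar xb \<le> 0" "0 \<le> P k xa - ustar xa"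
    using interpolation_sign_change[OF t0(1) k(3) less_imp_le[OF k(4)]] by blast+
  with k t0 show ?thesis unfolding g_def by (intro exI[of _ s] exI[of _ k]) auto
qed

theorem mainTheorem2:
  fixes Omega :: "(real ^ 'n) set"
    and ustar :: "real ^ 'n \<Rightarrow> real"
    and K :: "nat set" and R :: "nat \<Rightarrow> (real ^ 'n) set" and P :: "nat \<Rightarrow> real ^ 'n \<Rightarrow> real"
    and I :: "nat set" and xs :: "nat \<Rightarrow> real ^ 'n" and us :: "nat \<Rightarrow> real ^ 'n \<Rightarrow> real"
    and Gam :: "nat \<Rightarrow> (real ^ 'n) set" and reg :: "nat \<Rightarrow> nat"
    and \<alpha> \<beta> :: nat
  assumes Omega: "convex Omega" "polyhedron Omega"
    and pwa: "is_cont_pwa Omega ustar K R P"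
    and I: "finite I"
    and samples: "\<forall>i\<in>I. uo_region K R P (reg i) (Gam i) \<and> xs i \<in> interior (Gam i)
                          \<and> us i = P (reg i)"
    and ab: "\<alpha> \<in> I" "\<beta> \<in> I"
    and hyp: "Min ((\<lambda>j. us j (xs \<beta>)) ` J_ge I xs us \<alpha>) > ustar (xs \<beta>)"
             "ustar (xs \<beta>) = us \<beta> (xs \<beta>)"
  shows "\<exists>x\<gamma> u\<gamma>.
           (\<exists>t::real. 0 < t \<and> t < 1 \<and> x\<gamma> = t *\<^sub>R xs \<alpha> + (1 - t) *\<^sub>R xs \<beta>) \<and>
           (\<exists>k\<in>K. x\<gamma> \<in> R k \<and> u\<gamma> = P k) \<and> ustar x\<gamma> = u\<gamma> x\<gamma> \<and>
           u\<gamma> (xs \<alpha>) \<ge> us \<alpha> (xs \<alpha>) \<and> u\<gamma> (xs \<beta>) \<le> us \<beta> (xs \<beta>) \<and>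
           (\<forall>g. g \<notin> I \<longrightarrow>
              Min ((\<lambda>j. (us(g := u\<gamma>)) j (xs \<beta>)) `
                     J_ge (insert g I) (xs(g := x\<gamma>)) (us(g := u\<gamma>)) \<alpha>)
              \<le> us \<beta> (xs \<beta>))"
proof -
  have pw: "continuous_on Omega ustar" "finite K" "Omega = (\<Union>k\<in>K. R k)"
    "\<And>k. k \<in> K \<Longrightarrow> closed (R k)"
    "\<And>k. k \<in> K \<Longrightarrow> affine_fun (P k) \<and> (\<forall>x\<in>R k. ustar x = P k x)"
    using pwa unfolding is_cont_pwa_def by auto
  have sample_in_piece: "reg i \<in> K" "xs i \<in> interior (R (reg i))" "us i = P (reg i)"
    if "i \<in> I" for i
    using samples that interior_mono unfolding uo_region_def by blast+
  have "xs \<beta> \<in> Omega"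
    using sample_in_piece[OF ab(2)] pw(3) interior_subset by blast
  have ustar_at_\<alpha>: "ustar (xs \<alpha>) = us \<alpha> (xs \<alpha>)"
    using sample_in_piece[OF ab(1)] pw(5) interior_subset by (metis subsetD)
  have "\<alpha> \<in> J_ge I xs us \<alpha>" using ab unfolding J_ge_def by auto
  then have "Min ((\<lambda>j. us j (xs \<beta>)) ` J_ge I xs us \<alpha>) \<le> us \<alpha> (xs \<beta>)"
    using I by (intro Min_le) (auto simp: J_ge_def)
  then have "ustar (xs \<beta>) < P (reg \<alpha>) (xs \<beta>)"
    using hyp(1) sample_in_piece(3)[OF ab(1)] by simp
  from piece_dominating_on_segment[OF Omega(1) pw sample_in_piece(1,2)[OF ab(1)]
      \<open>xs \<beta> \<in> Omega\<close> this]
  obtain t k where tk: "0 < t" "t < 1" "k \<in> K" "t *\<^sub>R xs \<alpha> + (1 - t) *\<^sub>R xs \<beta> \<in> R k"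
      "us \<alpha> (xs \<alpha>) \<le> P k (xs \<alpha>)" "P k (xs \<beta>) \<le> us \<beta> (xs \<beta>)"
    using ustar_at_\<alpha> hyp(2) by auto
  have "ustar (t *\<^sub>R xs \<alpha> + (1 - t) *\<^sub>R xs \<beta>) = P k (t *\<^sub>R xs \<alpha> + (1 - t) *\<^sub>R xs \<beta>)"
    using pw(5)[OF tk(3)] tk(4) by blast
  moreover have "Min ((\<lambda>j. (us(g := P k)) j (xs \<beta>)) `
      J_ge (insert g I) (xs(g := t *\<^sub>R xs \<alpha> + (1 - t) *\<^sub>R xs \<beta>)) (us(g := P k)) \<alpha>)
      \<le> us \<beta> (xs \<beta>)"
    if "g \<notin> I" for g
    using Min_J_ge_insert_le[where us = us and xs = xs and u = "P k", OF I that ab(1) tk(5)] tk(6)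
    by (rule order_trans)
  ultimately show ?thesis
    using tk(1-6) by (intro exI[of _ "t *\<^sub>R xs \<alpha> + (1 - t) *\<^sub>R xs \<beta>"] exI[of _ "P k"]) blast
qed

end
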